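(* Let $$\begin{array}{ccc} X\times_B Y & \xrightarrow{\pi_2} & Y\\ \downarrow{\scriptstyle\pi_1} & & \downarrow{\scriptstyle p}\\ X & \xrightarrow{q} & B\end{array}$$ be a pullback diagram in the category $\mathbf{Loc}$ of locales, where $\pi_1$ is an isomorphism, $\pi_2$ is an open surjection and $q$ is a coequalizer. Then $p$ is an isomorphism.
   Context: A map of locales is open if its inverse image frame homomorphism has a left adjoint satisfying the Frobenius condition; it is surjective if its inverse image is injective. *)

theory Defs
  imports Main
begin

text \<open>We present a frame as a pair (carrier, order)
on an ambient type, so that frames of different sizes can live in one type.\<close>

type_synonym 'a frm = "'a set \<times> ('a \<Rightarrow> 'a \<Rightarrow> bool)"

definition carr :: "'a frm \<Rightarrow> 'a set" where "carr F = fst F"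
definition leq :: "'a frm \<Rightarrow> 'a \<Rightarrow> 'a \<Rightarrow> bool" where "leq F = snd F"

definition is_join :: "'a frm \<Rightarrow> 'a set \<Rightarrow> 'a \<Rightarrow> bool" where
  "is_join F S s \<longleftrightarrow> s \<in> carr F \<and> (\<forall>x\<in>S. leq F x s)
     \<and> (\<forall>u\<in>carr F. (\<forall>x\<in>S. leq F x u) \<longrightarrow> leq F s u)"

definition is_meet :: "'a frm \<Rightarrow> 'a set \<Rightarrow> 'a \<Rightarrow> bool" where
  "is_meet F S s \<longleftrightarrow> s \<in> carr F \<and> (\<forall>x\<in>S. leq F s x)
     \<and> (\<forall>u\<in>carr F. (\<forall>x\<in>S. leq F u x) \<longrightarrow> leq F u s)"

definition fjoin :: "'a frm \<Rightarrow> 'a set \<Rightarrow> 'a" where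
  "fjoin F S = (THE s. is_join F S s)"

definition fmeet :: "'a frm \<Rightarrow> 'a \<Rightarrow> 'a \<Rightarrow> 'a" where
  "fmeet F a b = (THE m. is_meet F {a, b} m)"

definition ftop :: "'a frm \<Rightarrow> 'a" where
  "ftop F = fjoin F (carr F)"

definition is_frame :: "'a frm \<Rightarrow> bool" where
  "is_frame F \<longleftrightarrow>
     (\<forall>x\<in>carr F. leq F x x)
   \<and> (\<forall>x\<in>carr F. \<forall>y\<in>carr F. leq F x y \<and> leq F y x \<longrightarrow> x = y)
   \<and> (\<forall>x\<in>carr F. \<forall>y\<in>carr F. \<forall>z\<in>carr F. leq F x y \<and> leq F y z \<longrightarrow> leq F x z)
   \<and> (\<forall>S. S \<subseteq> carr F \<longrightarrow> (\<exists>s. is_join F S s))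
   \<and> (\<forall>a\<in>carr F. \<forall>b\<in>carr F. \<exists>m. is_meet F {a, b} m)
   \<and> (\<forall>a\<in>carr F. \<forall>S. S \<subseteq> carr F \<longrightarrow>
        fmeet F a (fjoin F S) = fjoin F ((\<lambda>x. fmeet F a x) ` S))"

definition frame_hom :: "'a frm \<Rightarrow> 'b frm \<Rightarrow> ('a \<Rightarrow> 'b) \<Rightarrow> bool" where
  "frame_hom F G h \<longleftrightarrow> is_frame F \<and> is_frame G
   \<and> (\<forall>x\<in>carr F. h x \<in> carr G)
   \<and> (\<forall>S. S \<subseteq> carr F \<longrightarrow> h (fjoin F S) = fjoin G (h ` S))
   \<and> (\<forall>a\<in>carr F. \<forall>b\<in>carr F. h (fmeet F a b) = fmeet G (h a) (h b))
   \<and> h (ftop F) = ftop G"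

definition agree_on :: "'a set \<Rightarrow> ('a \<Rightarrow> 'b) \<Rightarrow> ('a \<Rightarrow> 'b) \<Rightarrow> bool" where
  "agree_on A h k \<longleftrightarrow> (\<forall>x\<in>A. h x = k x)"

definition frame_iso :: "'a frm \<Rightarrow> 'b frm \<Rightarrow> ('a \<Rightarrow> 'b) \<Rightarrow> bool" where
  "frame_iso F G h \<longleftrightarrow> frame_hom F G h \<and>
     (\<exists>k. frame_hom G F k \<and> (\<forall>x\<in>carr F. k (h x) = x) \<and> (\<forall>y\<in>carr G. h (k y) = y))"

text \<open>A map of locales f : X \<rightarrow> Y is represented by its inverse image frame
homomorphism f* : Y \<rightarrow> X (the function argument). Composition of locale maps
g \<circ> f corresponds to f* \<circ> g*.\<close>

definition loc_map :: "'x frm \<Rightarrow> 'y frm \<Rightarrow> ('y \<Rightarrow> 'x) \<Rightarrow> bool" where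
  "loc_map X Y f \<longleftrightarrow> frame_hom Y X f"

definition loc_iso :: "'x frm \<Rightarrow> 'y frm \<Rightarrow> ('y \<Rightarrow> 'x) \<Rightarrow> bool" where
  "loc_iso X Y f \<longleftrightarrow> loc_map X Y f \<and> frame_iso Y X f"

definition loc_open :: "'x frm \<Rightarrow> 'y frm \<Rightarrow> ('y \<Rightarrow> 'x) \<Rightarrow> bool" where
  "loc_open X Y f \<longleftrightarrow> loc_map X Y f \<and>
     (\<exists>l. (\<forall>a\<in>carr X. l a \<in> carr Y)
        \<and> (\<forall>a\<in>carr X. \<forall>b\<in>carr Y. leq Y (l a) b \<longleftrightarrow> leq X a (f b))
        \<and> (\<forall>a\<in>carr X. \<forall>b\<in>carr Y. l (fmeet X a (f b)) = fmeet Y (l a) b))"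

definition loc_surj :: "'x frm \<Rightarrow> 'y frm \<Rightarrow> ('y \<Rightarrow> 'x) \<Rightarrow> bool" where
  "loc_surj X Y f \<longleftrightarrow> loc_map X Y f \<and> inj_on f (carr Y)"

text \<open>Test objects W range over all locales whose
frame has its carrier inside the ambient type 'w (passed via TYPE). In the main
theorem 'w is chosen large enough that this is equivalent to the usual universal
property over all locales.\<close>

definition loc_coequalizer ::
  "'w itself \<Rightarrow> 'z frm \<Rightarrow> 'x frm \<Rightarrow> 'b frm \<Rightarrow> ('x \<Rightarrow> 'z) \<Rightarrow> ('x \<Rightarrow> 'z) \<Rightarrow> ('b \<Rightarrow> 'x) \<Rightarrow> bool"
  where
  "loc_coequalizer (_::'w itself) Z X B f g q \<longleftrightarrow>
     loc_map Z X f \<and> loc_map Z X g \<and> loc_map X B q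
   \<and> agree_on (carr B) (\<lambda>b. f (q b)) (\<lambda>b. g (q b))
   \<and> (\<forall>(W::'w frm) h. loc_map X W h \<and> agree_on (carr W) (\<lambda>w. f (h w)) (\<lambda>w. g (h w)) \<longrightarrow>
        (\<exists>k. loc_map B W k \<and> agree_on (carr W) (\<lambda>w. q (k w)) h
           \<and> (\<forall>k'. loc_map B W k' \<and> agree_on (carr W) (\<lambda>w. q (k' w)) h
                  \<longrightarrow> agree_on (carr W) k k')))"

definition loc_pullback ::
  "'w itself \<Rightarrow> 'p frm \<Rightarrow> 'x frm \<Rightarrow> 'y frm \<Rightarrow> 'b frm \<Rightarrow>
   ('x \<Rightarrow> 'p) \<Rightarrow> ('y \<Rightarrow> 'p) \<Rightarrow> ('b \<Rightarrow> 'x) \<Rightarrow> ('b \<Rightarrow> 'y) \<Rightarrow> bool"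
  where
  "loc_pullback (_::'w itself) P X Y B pi1 pi2 q p \<longleftrightarrow>
     loc_map P X pi1 \<and> loc_map P Y pi2 \<and> loc_map X B q \<and> loc_map Y B p
   \<and> agree_on (carr B) (\<lambda>b. pi1 (q b)) (\<lambda>b. pi2 (p b))
   \<and> (\<forall>(W::'w frm) a c. loc_map W X a \<and> loc_map W Y c
          \<and> agree_on (carr B) (\<lambda>b. a (q b)) (\<lambda>b. c (p b)) \<longrightarrow>
        (\<exists>h. loc_map W P h
           \<and> agree_on (carr X) (\<lambda>x. h (pi1 x)) a \<and> agree_on (carr Y) (\<lambda>y. h (pi2 y)) c
           \<and> (\<forall>h'. loc_map W P h'
                  \<and> agree_on (carr X) (\<lambda>x. h' (pi1 x)) a \<and> agree_on (carr Y) (\<lambda>y. h' (pi2 y)) c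
                  \<longrightarrow> agree_on (carr P) h h')))"

end

theory Submission
  imports Defs
begin

text \<open>
Work with inverse images throughout: the square of frame homomorphisms is a pushout, q is the
equalizer of f and g, and pi1 has an inverse k1. Put j = k1 \<circ> pi2. Then j \<circ> p = q, and j is
injective because pi2 is. Every cocone (a, c) under (q, p) satisfies c = a \<circ> j; for the cocone
(g, f \<circ> j) this says f \<circ> j = g \<circ> j, so j factors as q \<circ> t. Injectivity of j gives p \<circ> t = id, and
q \<circ> t \<circ> p = j \<circ> p = q with the uniqueness part of the equalizer property gives t \<circ> p = id.

The universal properties only range over frames carried by one fixed type, so each test frame
(Y, B, and the subframe of Z generated by the meets f x \<and> g x') is first transported into that
type along an injection.
\<close>

lemma is_frameD:
  assumes "is_frame F"
  shows "\<forall>x\<in>carr F. leq F x x"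
    and "\<forall>x\<in>carr F. \<forall>y\<in>carr F. leq F x y \<and> leq F y x \<longrightarrow> x = y"
    and "\<forall>x\<in>carr F. \<forall>y\<in>carr F. \<forall>z\<in>carr F. leq F x y \<and> leq F y z \<longrightarrow> leq F x z"
    and "\<forall>S. S \<subseteq> carr F \<longrightarrow> (\<exists>s. is_join F S s)"
    and "\<forall>a\<in>carr F. \<forall>b\<in>carr F. \<exists>m. is_meet F {a, b} m"
    and "\<forall>a\<in>carr F. \<forall>S. S \<subseteq> carr F \<longrightarrow> fmeet F a (fjoin F S) = fjoin F (fmeet F a ` S)"
  using assms unfolding is_frame_def by argo+

lemma is_frame_refl: "is_frame F \<Longrightarrow> x \<in> carr F \<Longrightarrow> leq F x x"
  using is_frameD(1) by blast

lemma is_frame_antisym: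
  "is_frame F \<Longrightarrow> x \<in> carr F \<Longrightarrow> y \<in> carr F \<Longrightarrow> leq F x y \<Longrightarrow> leq F y x \<Longrightarrow> x = y"
  using is_frameD(2) by blast

lemma is_frame_trans:
  "is_frame F \<Longrightarrow> x \<in> carr F \<Longrightarrow> y \<in> carr F \<Longrightarrow> z \<in> carr F \<Longrightarrow> leq F x y \<Longrightarrow> leq F y z
    \<Longrightarrow> leq F x z"
  using is_frameD(3) by blast

lemma is_frame_distrib:
  "is_frame F \<Longrightarrow> a \<in> carr F \<Longrightarrow> S \<subseteq> carr F
    \<Longrightarrow> fmeet F a (fjoin F S) = fjoin F (fmeet F a ` S)"
  using is_frameD(6) by blast

lemma is_join_unique:
  assumes antisym: "\<forall>x\<in>carr F. \<forall>y\<in>carr F. leq F x y \<and> leq F y x \<longrightarrow> x = y"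
    and s: "is_join F S s" and t: "is_join F S t"
  shows "s = t"
proof -
  have "s \<in> carr F" "t \<in> carr F" "leq F s t" "leq F t s"
    using s t unfolding is_join_def by simp_all
  with antisym show ?thesis by blast
qed

lemma is_meet_unique:
  assumes antisym: "\<forall>x\<in>carr F. \<forall>y\<in>carr F. leq F x y \<and> leq F y x \<longrightarrow> x = y"
    and s: "is_meet F S s" and t: "is_meet F S t"
  shows "s = t"
proof -
  have "s \<in> carr F" "t \<in> carr F" "leq F s t" "leq F t s"
    using s t unfolding is_meet_def by simp_all
  with antisym show ?thesis by blast
qed

lemma fjoin_eqI:
  assumes "\<forall>x\<in>carr F. \<forall>y\<in>carr F. leq F x y \<and> leq F y x \<longrightarrow> x = y" and "is_join F S s"
  shows "fjoin F S = s"
  unfolding fjoin_def using assms(2)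
  by (rule the_equality) (rule is_join_unique[OF assms(1) _ assms(2)])

lemma fmeet_eqI:
  assumes "\<forall>x\<in>carr F. \<forall>y\<in>carr F. leq F x y \<and> leq F y x \<longrightarrow> x = y" and "is_meet F {a, b} m"
  shows "fmeet F a b = m"
  unfolding fmeet_def using assms(2)
  by (rule the_equality) (rule is_meet_unique[OF assms(1) _ assms(2)])

lemma fjoin_is_join:
  assumes "is_frame F" "S \<subseteq> carr F"
  shows "is_join F S (fjoin F S)"
proof -
  obtain s where "is_join F S s"
    using is_frameD(4)[OF assms(1)] assms(2) by blast
  with fjoin_eqI[OF is_frameD(2)[OF assms(1)] this] show ?thesis by simp
qed

lemma fmeet_is_meet:
  assumes "is_frame F" "a \<in> carr F" "b \<in> carr F"
  shows "is_meet F {a, b} (fmeet F a b)"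
proof -
  obtain m where "is_meet F {a, b} m"
    using is_frameD(5)[OF assms(1)] assms(2,3) by blast
  with fmeet_eqI[OF is_frameD(2)[OF assms(1)] this] show ?thesis by simp
qed

lemma
  assumes "is_frame F" "S \<subseteq> carr F"
  shows fjoin_in_carr: "fjoin F S \<in> carr F"
    and fjoin_upper: "x \<in> S \<Longrightarrow> leq F x (fjoin F S)"
    and fjoin_least: "u \<in> carr F \<Longrightarrow> (\<And>x. x \<in> S \<Longrightarrow> leq F x u) \<Longrightarrow> leq F (fjoin F S) u"
  using fjoin_is_join[OF assms] unfolding is_join_def by blast+

lemma
  assumes "is_frame F" "a \<in> carr F" "b \<in> carr F"
  shows fmeet_in_carr: "fmeet F a b \<in> carr F"
    and fmeet_lower1: "leq F (fmeet F a b) a"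
    and fmeet_lower2: "leq F (fmeet F a b) b"
    and fmeet_greatest: "u \<in> carr F \<Longrightarrow> leq F u a \<Longrightarrow> leq F u b \<Longrightarrow> leq F u (fmeet F a b)"
  using fmeet_is_meet[OF assms] unfolding is_meet_def by blast+

lemma fmeet_commute: "fmeet F a b = fmeet F b a"
  by (simp add: fmeet_def insert_commute)

lemma leq_fmeet_iff:
  assumes F: "is_frame F" and ab: "a \<in> carr F" "b \<in> carr F" and u: "u \<in> carr F"
  shows "leq F u (fmeet F a b) \<longleftrightarrow> leq F u a \<and> leq F u b"
proof
  assume "leq F u (fmeet F a b)"
  with is_frame_trans[OF F u fmeet_in_carr[OF F ab]] fmeet_lower1[OF F ab] fmeet_lower2[OF F ab] ab
  show "leq F u a \<and> leq F u b" by blast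
qed (use fmeet_greatest[OF F ab u] in blast)

lemma eq_if_same_lower_bounds:
  assumes "is_frame F" "x \<in> carr F" "y \<in> carr F" "\<And>u. u \<in> carr F \<Longrightarrow> leq F u x \<longleftrightarrow> leq F u y"
  shows "x = y"
  using assms is_frame_antisym[OF assms(1-3)] is_frame_refl[OF assms(1)] by blast

lemma fmeet_interchange:
  assumes F: "is_frame F" and "a \<in> carr F" "b \<in> carr F" "c \<in> carr F" "d \<in> carr F"
  shows "fmeet F (fmeet F a b) (fmeet F c d) = fmeet F (fmeet F a c) (fmeet F b d)"
  by (rule eq_if_same_lower_bounds[OF F])
    (simp_all add: assms fmeet_in_carr leq_fmeet_iff conj_ac)

lemma ftop_in_carr: "is_frame F \<Longrightarrow> ftop F \<in> carr F"
  unfolding ftop_def by (simp add: fjoin_in_carr)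

lemma ftop_greatest: "is_frame F \<Longrightarrow> x \<in> carr F \<Longrightarrow> leq F x (ftop F)"
  unfolding ftop_def by (simp add: fjoin_upper)

lemma fmeet_ftop:
  assumes F: "is_frame F" and a: "a \<in> carr F"
  shows "fmeet F a (ftop F) = a"
  by (rule eq_if_same_lower_bounds[OF F fmeet_in_carr[OF F a ftop_in_carr[OF F]] a])
    (simp add: leq_fmeet_iff[OF F a ftop_in_carr[OF F]] ftop_greatest[OF F])

lemma fjoin_eq_ftop:
  assumes F: "is_frame F" and A: "A \<subseteq> carr F" "ftop F \<in> A"
  shows "fjoin F A = ftop F"
  using is_frame_antisym[OF F fjoin_in_carr[OF F A(1)] ftop_in_carr[OF F]]
    ftop_greatest[OF F fjoin_in_carr[OF F A(1)]] fjoin_upper[OF F A] by blast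

lemma fmeet_mono:
  assumes F: "is_frame F" and carr: "a \<in> carr F" "b \<in> carr F" "c \<in> carr F" "d \<in> carr F"
    and le: "leq F a c" "leq F b d"
  shows "leq F (fmeet F a b) (fmeet F c d)"
proof -
  have ab: "fmeet F a b \<in> carr F" using fmeet_in_carr[OF F carr(1,2)] .
  show ?thesis
    unfolding leq_fmeet_iff[OF F carr(3,4) ab]
    using is_frame_trans[OF F ab carr(1) carr(3) fmeet_lower1[OF F carr(1,2)] le(1)]
      is_frame_trans[OF F ab carr(2) carr(4) fmeet_lower2[OF F carr(1,2)] le(2)] by blast
qed

lemma fmeet_fjoin_fjoin_least:
  assumes F: "is_frame F" and CD: "C \<subseteq> carr F" "D \<subseteq> carr F" and u: "u \<in> carr F"
    and le: "\<And>c d. c \<in> C \<Longrightarrow> d \<in> D \<Longrightarrow> leq F (fmeet F c d) u"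
  shows "leq F (fmeet F (fjoin F C) (fjoin F D)) u"
proof -
  have each: "leq F (fmeet F (fjoin F C) d) u" if d: "d \<in> D" for d
  proof -
    have dF: "d \<in> carr F" using d CD(2) by blast
    have "fmeet F (fjoin F C) d = fjoin F (fmeet F d ` C)"
      using is_frame_distrib[OF F dF CD(1)] fmeet_commute by metis
    also have "leq F \<dots> u"
    proof (rule fjoin_least[OF F _ u])
      show "fmeet F d ` C \<subseteq> carr F" using fmeet_in_carr[OF F dF] CD(1) by blast
    qed (use le[OF _ d] in \<open>auto simp: fmeet_commute[of F d]\<close>)
    finally show ?thesis .
  qed
  have "fmeet F (fjoin F C) ` D \<subseteq> carr F"
    using fmeet_in_carr[OF F fjoin_in_carr[OF F CD(1)]] CD(2) by blast
  from fjoin_least[OF F this u] each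
  have "leq F (fjoin F (fmeet F (fjoin F C) ` D)) u" by blast
  then show ?thesis
    using is_frame_distrib[OF F fjoin_in_carr[OF F CD(1)] CD(2)] by simp
qed

lemma frame_homD:
  assumes "frame_hom F G h"
  shows "is_frame F" "is_frame G" "\<And>x. x \<in> carr F \<Longrightarrow> h x \<in> carr G"
    "\<And>S. S \<subseteq> carr F \<Longrightarrow> h (fjoin F S) = fjoin G (h ` S)"
    "\<And>a b. a \<in> carr F \<Longrightarrow> b \<in> carr F \<Longrightarrow> h (fmeet F a b) = fmeet G (h a) (h b)"
    "h (ftop F) = ftop G"
  using assms unfolding frame_hom_def by blast+

lemma frame_homI:
  assumes "is_frame F" "is_frame G" "\<And>x. x \<in> carr F \<Longrightarrow> h x \<in> carr G"
    "\<And>S. S \<subseteq> carr F \<Longrightarrow> h (fjoin F S) = fjoin G (h ` S)"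
    "\<And>a b. a \<in> carr F \<Longrightarrow> b \<in> carr F \<Longrightarrow> h (fmeet F a b) = fmeet G (h a) (h b)"
    "h (ftop F) = ftop G"
  shows "frame_hom F G h"
  unfolding frame_hom_def using assms by blast

lemma frame_hom_comp:
  assumes h: "frame_hom F G h" and k: "frame_hom G H k"
  shows "frame_hom F H (k \<circ> h)"
proof (rule frame_homI)
  fix S assume "S \<subseteq> carr F"
  moreover from this have "h ` S \<subseteq> carr G"
    using frame_homD(3)[OF h] by blast
  ultimately show "(k \<circ> h) (fjoin F S) = fjoin H ((k \<circ> h) ` S)"
    by (simp add: frame_homD(4)[OF h] frame_homD(4)[OF k] image_comp)
qed (use frame_homD[OF h] frame_homD[OF k] in simp_all)

lemma frame_hom_id: "is_frame F \<Longrightarrow> frame_hom F F id"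
  by (rule frame_homI) simp_all

section \<open>Transport of subframes along injections\<close>

definition subframe :: "'a frm \<Rightarrow> 'a set \<Rightarrow> bool" where
  "subframe F A \<longleftrightarrow> A \<subseteq> carr F \<and> (\<forall>T. T \<subseteq> A \<longrightarrow> fjoin F T \<in> A)
     \<and> (\<forall>a\<in>A. \<forall>b\<in>A. fmeet F a b \<in> A) \<and> ftop F \<in> A"

lemma subframeI:
  "A \<subseteq> carr F \<Longrightarrow> (\<And>T. T \<subseteq> A \<Longrightarrow> fjoin F T \<in> A)
    \<Longrightarrow> (\<And>a b. a \<in> A \<Longrightarrow> b \<in> A \<Longrightarrow> fmeet F a b \<in> A) \<Longrightarrow> ftop F \<in> A \<Longrightarrow> subframe F A"
  unfolding subframe_def by blast

lemma subframeD:
  assumes "subframe F A"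
  shows "A \<subseteq> carr F" "\<And>T. T \<subseteq> A \<Longrightarrow> fjoin F T \<in> A"
    "\<And>a b. a \<in> A \<Longrightarrow> b \<in> A \<Longrightarrow> fmeet F a b \<in> A" "ftop F \<in> A"
  using assms unfolding subframe_def by blast+

lemma subframe_carr: "is_frame F \<Longrightarrow> subframe F (carr F)"
  by (rule subframeI) (simp_all add: fjoin_in_carr fmeet_in_carr ftop_in_carr)

definition transport :: "'a frm \<Rightarrow> 'a set \<Rightarrow> ('a \<Rightarrow> 'c) \<Rightarrow> 'c frm" where
  "transport F A e = (e ` A, \<lambda>s t. leq F (the_inv_into A e s) (the_inv_into A e t))"

lemma transport_carr: "carr (transport F A e) = e ` A"
  by (simp add: transport_def carr_def)

context
  fixes F :: "'a frm" and A :: "'a set" and e :: "'a \<Rightarrow> 'c"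
  assumes F: "is_frame F" and sub: "subframe F A" and inj: "inj_on e A"
begin

private lemma in_carr: "a \<in> A \<Longrightarrow> a \<in> carr F"
  using subframeD(1)[OF sub] by blast

private lemma inv_e [simp]: "a \<in> A \<Longrightarrow> the_inv_into A e (e a) = a"
  using inj by (simp add: the_inv_into_f_f)

lemma transport_leq_iff: "a \<in> A \<Longrightarrow> b \<in> A \<Longrightarrow> leq (transport F A e) (e a) (e b) \<longleftrightarrow> leq F a b"
  by (simp add: transport_def leq_def)

private lemma transport_antisym:
  "\<forall>x\<in>carr (transport F A e). \<forall>y\<in>carr (transport F A e).
     leq (transport F A e) x y \<and> leq (transport F A e) y x \<longrightarrow> x = y"
  unfolding transport_carr using transport_leq_iff is_frame_antisym[OF F] in_carr by fastforce

private lemma transport_is_join: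
  assumes T: "T \<subseteq> A"
  shows "is_join (transport F A e) (e ` T) (e (fjoin F T))"
proof -
  have TF: "T \<subseteq> carr F" using T in_carr by blast
  have jA: "fjoin F T \<in> A" using subframeD(2)[OF sub T] .
  show ?thesis unfolding is_join_def transport_carr
  proof (intro conjI ballI impI)
    show "e (fjoin F T) \<in> e ` A" using jA by blast
  next
    fix x assume "x \<in> e ` T"
    then show "leq (transport F A e) x (e (fjoin F T))"
      using T jA fjoin_upper[OF F TF] transport_leq_iff by auto
  next
    fix u assume "u \<in> e ` A" and ub: "\<forall>x\<in>e ` T. leq (transport F A e) x u"
    then obtain a where a: "a \<in> A" "u = e a" by blast
    have "leq F (fjoin F T) a"
      using fjoin_least[OF F TF in_carr[OF a(1)]] ub a T transport_leq_iff by auto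
    then show "leq (transport F A e) (e (fjoin F T)) u"
      using a jA transport_leq_iff by simp
  qed
qed

private lemma transport_is_meet:
  assumes a: "a \<in> A" and b: "b \<in> A"
  shows "is_meet (transport F A e) {e a, e b} (e (fmeet F a b))"
proof -
  have mA: "fmeet F a b \<in> A" using subframeD(3)[OF sub a b] .
  have ab: "a \<in> carr F" "b \<in> carr F" using a b in_carr by auto
  show ?thesis unfolding is_meet_def transport_carr
  proof (intro conjI ballI impI)
    show "e (fmeet F a b) \<in> e ` A" using mA by blast
  next
    fix x assume "x \<in> {e a, e b}"
    then show "leq (transport F A e) (e (fmeet F a b)) x"
      using mA a b fmeet_lower1[OF F ab] fmeet_lower2[OF F ab] transport_leq_iff by auto
  next
    fix u assume "u \<in> e ` A" and lb: "\<forall>x\<in>{e a, e b}. leq (transport F A e) u x"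
    then obtain c where c: "c \<in> A" "u = e c" by blast
    have "leq F c (fmeet F a b)"
      using fmeet_greatest[OF F ab in_carr[OF c(1)]] lb a b c transport_leq_iff by simp
    then show "leq (transport F A e) u (e (fmeet F a b))"
      using c mA transport_leq_iff by simp
  qed
qed

lemma transport_fjoin: "T \<subseteq> A \<Longrightarrow> fjoin (transport F A e) (e ` T) = e (fjoin F T)"
  using fjoin_eqI[OF transport_antisym transport_is_join] .

lemma transport_fmeet: "a \<in> A \<Longrightarrow> b \<in> A \<Longrightarrow> fmeet (transport F A e) (e a) (e b) = e (fmeet F a b)"
  using fmeet_eqI[OF transport_antisym transport_is_meet] .

lemma transport_ftop: "ftop (transport F A e) = e (ftop F)"
  using transport_fjoin[of A] fjoin_eq_ftop[OF F subframeD(1,4)[OF sub]]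
  by (simp add: ftop_def[of "transport F A e"] transport_carr)

private lemma transport_distrib:
  assumes "a \<in> carr (transport F A e)" "S \<subseteq> carr (transport F A e)"
  shows "fmeet (transport F A e) a (fjoin (transport F A e) S)
    = fjoin (transport F A e) (fmeet (transport F A e) a ` S)"
proof -
  from assms obtain a' T where a': "a' \<in> A" "a = e a'" and T: "T \<subseteq> A" "S = e ` T"
    by (auto simp: transport_carr subset_image_iff)
  have TF: "T \<subseteq> carr F" and meets: "fmeet F a' ` T \<subseteq> A"
    using T a' in_carr subframeD(3)[OF sub] by auto
  have "fmeet (transport F A e) a (fjoin (transport F A e) S) = e (fmeet F a' (fjoin F T))"
    using a' T transport_fjoin transport_fmeet subframeD(2)[OF sub] by simp
  also have "\<dots> = e (fjoin F (fmeet F a' ` T))"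
    using is_frame_distrib[OF F in_carr[OF a'(1)] TF] by simp
  also have "\<dots> = fjoin (transport F A e) (e ` fmeet F a' ` T)"
    using transport_fjoin[OF meets] by simp
  also have "e ` fmeet F a' ` T = fmeet (transport F A e) a ` S"
    unfolding a'(2) T(2) image_image
    by (rule image_cong[OF refl]) (simp add: transport_fmeet a'(1) subsetD[OF T(1)])
  finally show ?thesis .
qed

lemma is_frame_transport: "is_frame (transport F A e)"
  unfolding is_frame_def
proof (intro conjI ballI allI impI)
  fix x assume "x \<in> carr (transport F A e)"
  then show "leq (transport F A e) x x"
    using transport_leq_iff is_frame_refl[OF F] in_carr by (auto simp: transport_carr)
next
  fix x y z assume carr: "x \<in> carr (transport F A e)" "y \<in> carr (transport F A e)"
    "z \<in> carr (transport F A e)" and le: "leq (transport F A e) x y \<and> leq (transport F A e) y z"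
  from carr obtain a b c where abc: "a \<in> A" "b \<in> A" "c \<in> A" and xyz: "x = e a" "y = e b" "z = e c"
    unfolding transport_carr by blast
  with le have "leq F a b" "leq F b c"
    using transport_leq_iff by simp_all
  with is_frame_trans[OF F in_carr[OF abc(1)] in_carr[OF abc(2)] in_carr[OF abc(3)]]
  show "leq (transport F A e) x z"
    using xyz abc transport_leq_iff by simp
next
  fix S assume "S \<subseteq> carr (transport F A e)"
  then obtain T where "T \<subseteq> A" "S = e ` T"
    by (auto simp: transport_carr subset_image_iff)
  then show "\<exists>s. is_join (transport F A e) S s"
    using transport_is_join by blast
next
  fix a b assume "a \<in> carr (transport F A e)" "b \<in> carr (transport F A e)"
  then show "\<exists>m. is_meet (transport F A e) {a, b} m"
    using transport_is_meet by (auto simp: transport_carr)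
next
  fix a S assume "a \<in> carr (transport F A e)" "S \<subseteq> carr (transport F A e)"
  then show "fmeet (transport F A e) a (fjoin (transport F A e) S)
      = fjoin (transport F A e) (fmeet (transport F A e) a ` S)"
    by (rule transport_distrib)
qed (use transport_antisym in blast)

lemma frame_hom_into_transport:
  assumes h: "frame_hom G F h" and hA: "\<And>x. x \<in> carr G \<Longrightarrow> h x \<in> A"
  shows "frame_hom G (transport F A e) (e \<circ> h)"
proof (rule frame_homI)
  fix S assume S: "S \<subseteq> carr G"
  then have "h ` S \<subseteq> A" using hA by blast
  then show "(e \<circ> h) (fjoin G S) = fjoin (transport F A e) ((e \<circ> h) ` S)"
    by (simp add: frame_homD(4)[OF h S] transport_fjoin[symmetric] image_comp)
qed (use frame_homD[OF h] hA is_frame_transport transport_fmeet transport_ftop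
      in \<open>auto simp: transport_carr\<close>)

lemma frame_hom_from_transport: "frame_hom (transport F A e) F (the_inv_into A e)"
proof (rule frame_homI)
  fix S assume "S \<subseteq> carr (transport F A e)"
  then obtain T where T: "T \<subseteq> A" "S = e ` T"
    by (auto simp: transport_carr subset_image_iff)
  then show "the_inv_into A e (fjoin (transport F A e) S) = fjoin F (the_inv_into A e ` S)"
    using transport_fjoin subframeD(2)[OF sub] by (auto simp: image_image subsetD)
qed (use F is_frame_transport in_carr transport_fmeet transport_ftop subframeD(3,4)[OF sub]
      in \<open>auto simp: transport_carr\<close>)

end

section \<open>The subframe generated by the meets of two homomorphisms\<close>

definition meet_gens :: "'x frm \<Rightarrow> 'z frm \<Rightarrow> ('x \<Rightarrow> 'z) \<Rightarrow> ('x \<Rightarrow> 'z) \<Rightarrow> 'z set" where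
  "meet_gens X Z f g = {fmeet Z (f x) (g x') | x x'. x \<in> carr X \<and> x' \<in> carr X}"

definition meet_gens_below ::
  "'x frm \<Rightarrow> 'z frm \<Rightarrow> ('x \<Rightarrow> 'z) \<Rightarrow> ('x \<Rightarrow> 'z) \<Rightarrow> 'z \<Rightarrow> 'z set" where
  "meet_gens_below X Z f g z = {c \<in> meet_gens X Z f g. leq Z c z}"

text \<open>Unlike Z itself, this subframe embeds into a type built from 'x: each element is the join
of the generators below it and hence determined by their indices (x, x').\<close>

definition meet_generated :: "'x frm \<Rightarrow> 'z frm \<Rightarrow> ('x \<Rightarrow> 'z) \<Rightarrow> ('x \<Rightarrow> 'z) \<Rightarrow> 'z set" where
  "meet_generated X Z f g = {z \<in> carr Z. z = fjoin Z (meet_gens_below X Z f g z)}"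

context
  fixes X :: "'x frm" and Z :: "'z frm" and f g :: "'x \<Rightarrow> 'z"
  assumes f: "frame_hom X Z f" and g: "frame_hom X Z g"
begin

private lemma X_frame: "is_frame X" and Z_frame: "is_frame Z"
  using frame_homD(1,2)[OF f] by auto

lemma meet_gens_subset: "meet_gens X Z f g \<subseteq> carr Z"
  unfolding meet_gens_def using fmeet_in_carr[OF Z_frame] frame_homD(3)[OF f] frame_homD(3)[OF g]
  by blast

lemma meet_gens_below_subset: "meet_gens_below X Z f g z \<subseteq> carr Z"
  unfolding meet_gens_below_def using meet_gens_subset by blast

lemma f_in_meet_gens:
  assumes x: "x \<in> carr X"
  shows "f x \<in> meet_gens X Z f g"
proof -
  have "f x = fmeet Z (f x) (g (ftop X))"
    using fmeet_ftop[OF Z_frame frame_homD(3)[OF f x]] frame_homD(6)[OF g] by simp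
  then show ?thesis
    unfolding meet_gens_def using x ftop_in_carr[OF X_frame] by blast
qed

lemma g_in_meet_gens:
  assumes x: "x \<in> carr X"
  shows "g x \<in> meet_gens X Z f g"
proof -
  have "g x = fmeet Z (f (ftop X)) (g x)"
    using fmeet_ftop[OF Z_frame frame_homD(3)[OF g x]] frame_homD(6)[OF f] fmeet_commute by metis
  then show ?thesis
    unfolding meet_gens_def using x ftop_in_carr[OF X_frame] by blast
qed

lemma fmeet_in_meet_gens:
  assumes "c \<in> meet_gens X Z f g" "d \<in> meet_gens X Z f g"
  shows "fmeet Z c d \<in> meet_gens X Z f g"
proof -
  obtain x x' u u' where xu: "x \<in> carr X" "x' \<in> carr X" "u \<in> carr X" "u' \<in> carr X"
    and cd: "c = fmeet Z (f x) (g x')" "d = fmeet Z (f u) (g u')"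
    using assms unfolding meet_gens_def by blast
  have "fmeet Z c d = fmeet Z (fmeet Z (f x) (f u)) (fmeet Z (g x') (g u'))"
    unfolding cd using fmeet_interchange[OF Z_frame] frame_homD(3)[OF f] frame_homD(3)[OF g] xu
    by simp
  also have "\<dots> = fmeet Z (f (fmeet X x u)) (g (fmeet X x' u'))"
    using frame_homD(5)[OF f] frame_homD(5)[OF g] xu by simp
  finally show ?thesis
    unfolding meet_gens_def using fmeet_in_carr[OF X_frame] xu by blast
qed

lemma fjoin_meet_gens_below_le:
  "z \<in> carr Z \<Longrightarrow> leq Z (fjoin Z (meet_gens_below X Z f g z)) z"
  using fjoin_least[OF Z_frame meet_gens_below_subset] unfolding meet_gens_below_def by blast

lemma fjoin_meet_gens_below_mono:
  assumes "z \<in> carr Z" "w \<in> carr Z" "leq Z z w"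
  shows "leq Z (fjoin Z (meet_gens_below X Z f g z)) (fjoin Z (meet_gens_below X Z f g w))"
proof (rule fjoin_least[OF Z_frame meet_gens_below_subset
      fjoin_in_carr[OF Z_frame meet_gens_below_subset]])
  fix c assume c: "c \<in> meet_gens_below X Z f g z"
  then have "c \<in> meet_gens_below X Z f g w"
    using assms is_frame_trans[OF Z_frame] meet_gens_below_subset
    unfolding meet_gens_below_def by blast
  then show "leq Z c (fjoin Z (meet_gens_below X Z f g w))"
    using fjoin_upper[OF Z_frame meet_gens_below_subset] by blast
qed

lemma meet_generatedI:
  assumes z: "z \<in> carr Z" and le: "leq Z z (fjoin Z (meet_gens_below X Z f g z))"
  shows "z \<in> meet_generated X Z f g"
  unfolding meet_generated_def
  using is_frame_antisym[OF Z_frame z fjoin_in_carr[OF Z_frame meet_gens_below_subset] le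
      fjoin_meet_gens_below_le[OF z]] z by blast

lemma meet_gens_subset_meet_generated: "meet_gens X Z f g \<subseteq> meet_generated X Z f g"
proof
  fix c assume c: "c \<in> meet_gens X Z f g"
  then have cZ: "c \<in> carr Z" using meet_gens_subset by blast
  with c have "c \<in> meet_gens_below X Z f g c"
    unfolding meet_gens_below_def using is_frame_refl[OF Z_frame] by blast
  then show "c \<in> meet_generated X Z f g"
    using meet_generatedI[OF cZ] fjoin_upper[OF Z_frame meet_gens_below_subset] by blast
qed

lemma meet_generated_eq_fjoin:
  "z \<in> meet_generated X Z f g \<Longrightarrow> z = fjoin Z (meet_gens_below X Z f g z)"
  unfolding meet_generated_def by blast

lemma meet_generated_subset: "meet_generated X Z f g \<subseteq> carr Z"
  unfolding meet_generated_def by blast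

lemma fjoin_in_meet_generated:
  assumes T: "T \<subseteq> meet_generated X Z f g"
  shows "fjoin Z T \<in> meet_generated X Z f g"
proof -
  have TZ: "T \<subseteq> carr Z" using T meet_generated_subset by blast
  have sZ: "fjoin Z T \<in> carr Z" using fjoin_in_carr[OF Z_frame TZ] .
  have "leq Z t (fjoin Z (meet_gens_below X Z f g (fjoin Z T)))" if t: "t \<in> T" for t
  proof -
    have "t = fjoin Z (meet_gens_below X Z f g t)"
      using T t meet_generated_eq_fjoin by blast
    then show ?thesis
      using fjoin_meet_gens_below_mono[OF _ sZ fjoin_upper[OF Z_frame TZ t]] t TZ by auto
  qed
  then show ?thesis
    using meet_generatedI[OF sZ]
      fjoin_least[OF Z_frame TZ fjoin_in_carr[OF Z_frame meet_gens_below_subset]]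
    by blast
qed

lemma fmeet_in_meet_generated:
  assumes a: "a \<in> meet_generated X Z f g" and b: "b \<in> meet_generated X Z f g"
  shows "fmeet Z a b \<in> meet_generated X Z f g"
proof -
  have ab: "a \<in> carr Z" "b \<in> carr Z" using a b meet_generated_subset by blast+
  have mZ: "fmeet Z a b \<in> carr Z" using fmeet_in_carr[OF Z_frame ab] .
  have le: "leq Z (fmeet Z c d) (fjoin Z (meet_gens_below X Z f g (fmeet Z a b)))"
    if c: "c \<in> meet_gens_below X Z f g a" and d: "d \<in> meet_gens_below X Z f g b" for c d
  proof -
    have cd: "c \<in> carr Z" "d \<in> carr Z" using c d meet_gens_below_subset by blast+
    have "fmeet Z c d \<in> meet_gens_below X Z f g (fmeet Z a b)"
      using fmeet_in_meet_gens fmeet_mono[OF Z_frame cd ab] c d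
      unfolding meet_gens_below_def by blast
    then show ?thesis using fjoin_upper[OF Z_frame meet_gens_below_subset] by blast
  qed
  have "leq Z (fmeet Z (fjoin Z (meet_gens_below X Z f g a)) (fjoin Z (meet_gens_below X Z f g b)))
      (fjoin Z (meet_gens_below X Z f g (fmeet Z a b)))"
    by (rule fmeet_fjoin_fjoin_least[OF Z_frame meet_gens_below_subset meet_gens_below_subset
          fjoin_in_carr[OF Z_frame meet_gens_below_subset] le])
  then have "leq Z (fmeet Z a b) (fjoin Z (meet_gens_below X Z f g (fmeet Z a b)))"
    unfolding meet_generated_eq_fjoin[OF a, symmetric] meet_generated_eq_fjoin[OF b, symmetric] .
  then show ?thesis using meet_generatedI[OF mZ] by blast
qed

lemma subframe_meet_generated: "subframe Z (meet_generated X Z f g)"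
proof (rule subframeI)
  have "ftop Z \<in> meet_gens X Z f g"
    using f_in_meet_gens[OF ftop_in_carr[OF X_frame]] frame_homD(6)[OF f] by simp
  then show "ftop Z \<in> meet_generated X Z f g"
    using meet_gens_subset_meet_generated by blast
qed (use meet_generated_subset fjoin_in_meet_generated fmeet_in_meet_generated in auto)

lemma inj_on_meet_generated_pairs_below:
  "inj_on (\<lambda>z. {(x, x'). x \<in> carr X \<and> x' \<in> carr X \<and> leq Z (fmeet Z (f x) (g x')) z})
     (meet_generated X Z f g)"
proof (rule inj_onI)
  fix z w
  assume z: "z \<in> meet_generated X Z f g" and w: "w \<in> meet_generated X Z f g"
    and eq: "{(x, x'). x \<in> carr X \<and> x' \<in> carr X \<and> leq Z (fmeet Z (f x) (g x')) z}
      = {(x, x'). x \<in> carr X \<and> x' \<in> carr X \<and> leq Z (fmeet Z (f x) (g x')) w}"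
  have "meet_gens_below X Z f g v = (\<lambda>(x, x'). fmeet Z (f x) (g x')) `
      {(x, x'). x \<in> carr X \<and> x' \<in> carr X \<and> leq Z (fmeet Z (f x) (g x')) v}" for v
    unfolding meet_gens_below_def meet_gens_def by auto
  then have "meet_gens_below X Z f g z = meet_gens_below X Z f g w"
    using eq by simp
  then show "z = w"
    using meet_generated_eq_fjoin[OF z] meet_generated_eq_fjoin[OF w] by simp
qed

end

lemma frame_hom_transport_carr:
  assumes "is_frame V" "inj_on e (carr V)"
  shows "frame_hom V (transport V (carr V) e) e"
    and "frame_hom (transport V (carr V) e) V (the_inv_into (carr V) e)"
  using frame_hom_into_transport[OF assms(1) subframe_carr[OF assms(1)] assms(2)
      frame_hom_id[OF assms(1)]]
    frame_hom_from_transport[OF assms(1) subframe_carr[OF assms(1)] assms(2)]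
  by simp_all

lemma loc_pullbackD:
  assumes "loc_pullback TYPE('w) P X Y B pi1 pi2 q p"
  shows "frame_hom X P pi1" "frame_hom Y P pi2" "frame_hom B X q" "frame_hom B Y p"
    "\<forall>b\<in>carr B. pi1 (q b) = pi2 (p b)"
    "\<forall>(W::'w frm) a c. frame_hom X W a \<and> frame_hom Y W c
          \<and> (\<forall>b\<in>carr B. a (q b) = c (p b)) \<longrightarrow>
        (\<exists>h. frame_hom P W h
           \<and> (\<forall>x\<in>carr X. h (pi1 x) = a x) \<and> (\<forall>y\<in>carr Y. h (pi2 y) = c y)
           \<and> (\<forall>h'. frame_hom P W h'
                  \<and> (\<forall>x\<in>carr X. h' (pi1 x) = a x) \<and> (\<forall>y\<in>carr Y. h' (pi2 y) = c y)
                  \<longrightarrow> (\<forall>z\<in>carr P. h z = h' z)))"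
  using assms unfolding loc_pullback_def loc_map_def agree_on_def by argo+

lemma loc_coequalizerD:
  assumes "loc_coequalizer TYPE('w) Z X B f g q"
  shows "frame_hom X Z f" "frame_hom X Z g" "frame_hom B X q" "\<forall>b\<in>carr B. f (q b) = g (q b)"
    "\<forall>(W::'w frm) h. frame_hom W X h \<and> (\<forall>w\<in>carr W. f (h w) = g (h w)) \<longrightarrow>
        (\<exists>k. frame_hom W B k \<and> (\<forall>w\<in>carr W. q (k w) = h w)
           \<and> (\<forall>k'. frame_hom W B k' \<and> (\<forall>w\<in>carr W. q (k' w) = h w)
                  \<longrightarrow> (\<forall>w\<in>carr W. k w = k' w)))"
  using assms unfolding loc_coequalizer_def loc_map_def agree_on_def by argo+

lemma loc_pullback_cocone_agree:
  fixes W :: "'w frm"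
  assumes pb: "loc_pullback TYPE('w) P X Y B pi1 pi2 q p"
    and a: "frame_hom X W a" and c: "frame_hom Y W c"
    and aq_cp: "\<forall>b\<in>carr B. a (q b) = c (p b)"
    and x: "x \<in> carr X" and y: "y \<in> carr Y" and xy: "pi1 x = pi2 y"
  shows "a x = c y"
proof -
  obtain h where "\<forall>x\<in>carr X. h (pi1 x) = a x" "\<forall>y\<in>carr Y. h (pi2 y) = c y"
    using loc_pullbackD(6)[OF pb] a c aq_cp by blast
  with x y xy show ?thesis by metis
qed

lemma loc_coequalizer_lift:
  fixes e :: "'v \<Rightarrow> 'w"
  assumes coeq: "loc_coequalizer TYPE('w) Z X B f g q"
    and h: "frame_hom V X h" and fh_gh: "\<forall>v\<in>carr V. f (h v) = g (h v)"
    and e: "inj_on e (carr V)"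
  obtains t where "frame_hom V B t" "\<forall>v\<in>carr V. q (t v) = h v"
proof -
  have V: "is_frame V" using frame_homD(1)[OF h] .
  let ?W = "transport V (carr V) e" and ?d = "the_inv_into (carr V) e"
  have hd: "frame_hom ?W X (h \<circ> ?d)"
    using frame_hom_comp[OF frame_hom_transport_carr(2)[OF V e] h] .
  have "\<forall>w\<in>carr ?W. f ((h \<circ> ?d) w) = g ((h \<circ> ?d) w)"
    using fh_gh e by (auto simp: transport_carr the_inv_into_f_f)
  then obtain k where k: "frame_hom ?W B k" and qk: "\<forall>w\<in>carr ?W. q (k w) = (h \<circ> ?d) w"
    using loc_coequalizerD(5)[OF coeq, rule_format, OF conjI[OF hd]] by blast
  show thesis
  proof
    show "frame_hom V B (k \<circ> e)"
      using frame_hom_comp[OF frame_hom_transport_carr(1)[OF V e] k] .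
    show "\<forall>v\<in>carr V. q ((k \<circ> e) v) = h v"
      using qk e by (auto simp: transport_carr the_inv_into_f_f)
  qed
qed

lemma loc_coequalizer_cancel:
  fixes e :: "'v \<Rightarrow> 'w"
  assumes coeq: "loc_coequalizer TYPE('w) Z X B f g q"
    and k: "frame_hom V B k" and k': "frame_hom V B k'" and qk: "\<forall>v\<in>carr V. q (k v) = q (k' v)"
    and e: "inj_on e (carr V)" and v: "v \<in> carr V"
  shows "k v = k' v"
proof -
  have V: "is_frame V" using frame_homD(1)[OF k] .
  let ?W = "transport V (carr V) e" and ?d = "the_inv_into (carr V) e"
  have kd: "frame_hom ?W B (k \<circ> ?d)" and k'd: "frame_hom ?W B (k' \<circ> ?d)"
    using frame_hom_comp[OF frame_hom_transport_carr(2)[OF V e]] k k' by blast+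
  have q: "frame_hom B X q" and fq_gq: "\<forall>b\<in>carr B. f (q b) = g (q b)"
    using loc_coequalizerD(3,4)[OF coeq] by blast+
  have qkd: "frame_hom ?W X (q \<circ> (k \<circ> ?d))"
    using frame_hom_comp[OF kd q] .
  have "\<forall>w\<in>carr ?W. f ((q \<circ> (k \<circ> ?d)) w) = g ((q \<circ> (k \<circ> ?d)) w)"
    using fq_gq frame_homD(3)[OF kd] by simp
  then obtain u where u:
    "\<forall>k''. frame_hom ?W B k'' \<and> (\<forall>w\<in>carr ?W. q (k'' w) = (q \<circ> (k \<circ> ?d)) w)
       \<longrightarrow> (\<forall>w\<in>carr ?W. u w = k'' w)"
    using loc_coequalizerD(5)[OF coeq, rule_format, OF conjI[OF qkd]] by blast
  have "\<forall>w\<in>carr ?W. u w = (k \<circ> ?d) w"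
    using u[rule_format, OF conjI[OF kd]] by simp
  moreover have "\<forall>w\<in>carr ?W. u w = (k' \<circ> ?d) w"
    using u[rule_format, OF conjI[OF k'd]] qk frame_homD(3)[OF frame_hom_transport_carr(2)[OF V e]]
    by simp
  moreover have "e v \<in> carr ?W" and "?d (e v) = v"
    using v e by (simp_all add: transport_carr the_inv_into_f_f)
  ultimately show ?thesis by (metis comp_apply)
qed

lemma loc_pullback_equalizes_fork:
  fixes P :: "'p frm" and X :: "'x frm" and Y :: "'y frm" and B :: "'b frm" and Z :: "'z frm"
  assumes pb: "loc_pullback TYPE(('x \<times> 'y \<times> 'b \<times> 'p) set) P X Y B pi1 pi2 q p"
    and inj1: "inj_on pi1 (carr X)"
    and f: "frame_hom X Z f" and g: "frame_hom X Z g" and fq_gq: "\<forall>b\<in>carr B. f (q b) = g (q b)"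
    and j: "frame_hom Y X j" and jp: "\<forall>b\<in>carr B. j (p b) = q b"
    and y: "y \<in> carr Y" and pij: "pi1 (j y) = pi2 y"
  shows "f (j y) = g (j y)"
proof -
  have Z: "is_frame Z" using frame_homD(2)[OF f] .
  let ?A = "meet_generated X Z f g"
  let ?pairs = "\<lambda>z. {(x, x'). x \<in> carr X \<and> x' \<in> carr X \<and> leq Z (fmeet Z (f x) (g x')) z}"
  \<comment> \<open>The test type has a single 'x slot; the second index goes into the 'p slot via pi1.\<close>
  define e :: "'z \<Rightarrow> ('x \<times> 'y \<times> 'b \<times> 'p) set"
    where "e z = (\<lambda>(x, x'). (x, undefined, undefined, pi1 x')) ` ?pairs z" for z
  have "inj_on (\<lambda>(x, x'). (x, undefined :: 'y, undefined :: 'b, pi1 x')) (carr X \<times> carr X)"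
    using inj1 by (auto simp: inj_on_def)
  then have "inj_on (image (\<lambda>(x, x'). (x, undefined :: 'y, undefined :: 'b, pi1 x'))) (?pairs ` ?A)"
    by (rule inj_on_subset[OF inj_on_image_Pow]) blast
  then have inj: "inj_on e ?A"
    unfolding e_def using comp_inj_on[OF inj_on_meet_generated_pairs_below[OF f g]]
    by (simp add: o_def)
  let ?W = "transport Z ?A e"
  have sub: "subframe Z ?A" using subframe_meet_generated[OF f g] .
  have in_A: "\<And>x. x \<in> carr X \<Longrightarrow> f x \<in> ?A" "\<And>x. x \<in> carr X \<Longrightarrow> g x \<in> ?A"
    using f_in_meet_gens[OF f g] g_in_meet_gens[OF f g] meet_gens_subset_meet_generated[OF f g]
    by blast+
  have eg: "frame_hom X ?W (e \<circ> g)" and efj: "frame_hom Y ?W (e \<circ> f \<circ> j)"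
    using frame_hom_into_transport[OF Z sub inj] in_A f g frame_hom_comp[OF j]
    by (metis comp_assoc)+
  have "\<forall>b\<in>carr B. (e \<circ> g) (q b) = (e \<circ> f \<circ> j) (p b)"
    using fq_gq jp by simp
  with loc_pullback_cocone_agree[OF pb eg efj _ frame_homD(3)[OF j y] y pij]
  have "e (g (j y)) = e (f (j y))" by simp
  then show ?thesis
    using inj_onD[OF inj] in_A frame_homD(3)[OF j y] by metis
qed

lemma loc_iso_of_coequalizer_factor:
  fixes eY :: "'y \<Rightarrow> 'w" and eB :: "'b \<Rightarrow> 'w"
  assumes coeq: "loc_coequalizer TYPE('w) Z X B f g q"
    and p: "frame_hom B Y p" and j: "frame_hom Y X j" and inj_j: "inj_on j (carr Y)"
    and jp: "\<forall>b\<in>carr B. j (p b) = q b" and fj_gj: "\<forall>y\<in>carr Y. f (j y) = g (j y)"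
    and eY: "inj_on eY (carr Y)" and eB: "inj_on eB (carr B)"
  shows "loc_iso Y B p"
proof -
  obtain t where t: "frame_hom Y B t" and qt: "\<forall>y\<in>carr Y. q (t y) = j y"
    using loc_coequalizer_lift[OF coeq j fj_gj eY] by blast
  have pt: "\<forall>y\<in>carr Y. p (t y) = y"
    using inj_j jp qt frame_homD(3)[OF t] frame_homD(3)[OF p] unfolding inj_on_def by metis
  have "\<forall>b\<in>carr B. q ((t \<circ> p) b) = q (id b)"
    using qt jp frame_homD(3)[OF p] by simp
  then have tp: "\<forall>b\<in>carr B. t (p b) = b"
    using loc_coequalizer_cancel[OF coeq frame_hom_comp[OF p t] frame_hom_id[OF frame_homD(1)[OF p]]
        _ eB]
    by (metis comp_apply id_apply)
  show ?thesis
    unfolding loc_iso_def loc_map_def frame_iso_def using p t pt tp by blast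
qed

theorem lemma2p3:
  fixes P :: "'p frm" and X :: "'x frm" and Y :: "'y frm" and B :: "'b frm" and Z :: "'z frm"
    and pi1 :: "'x \<Rightarrow> 'p" and pi2 :: "'y \<Rightarrow> 'p"
    and q :: "'b \<Rightarrow> 'x" and p :: "'b \<Rightarrow> 'y"
    and f g :: "'x \<Rightarrow> 'z"
  assumes pb: "loc_pullback TYPE(('x \<times> 'y \<times> 'b \<times> 'p) set) P X Y B pi1 pi2 q p"
    and iso1: "loc_iso P X pi1"
    and open2: "loc_open P Y pi2"
    and surj2: "loc_surj P Y pi2"
    and coeq: "loc_coequalizer TYPE(('x \<times> 'y \<times> 'b \<times> 'p) set) Z X B f g q"
  shows "loc_iso Y B p"
proof -
  obtain k1 where k1: "frame_hom P X k1" and k1_pi1: "\<forall>x\<in>carr X. k1 (pi1 x) = x"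
    and pi1_k1: "\<forall>z\<in>carr P. pi1 (k1 z) = z"
    using iso1 unfolding loc_iso_def frame_iso_def by blast
  define j where "j = k1 \<circ> pi2"
  have j: "frame_hom Y X j"
    unfolding j_def using frame_hom_comp[OF loc_pullbackD(2)[OF pb] k1] .
  have jp: "\<forall>b\<in>carr B. j (p b) = q b"
    unfolding j_def using loc_pullbackD(3,5)[OF pb] k1_pi1 frame_homD(3) by fastforce
  have pi1_j: "\<forall>y\<in>carr Y. pi1 (j y) = pi2 y"
    unfolding j_def using pi1_k1 frame_homD(3)[OF loc_pullbackD(2)[OF pb]] by simp
  have inj_j: "inj_on j (carr Y)"
    using surj2 pi1_j unfolding loc_surj_def inj_on_def by metis
  have inj1: "inj_on pi1 (carr X)"
    using inj_on_inverseI k1_pi1 by metis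
  have "\<forall>y\<in>carr Y. f (j y) = g (j y)"
    using loc_pullback_equalizes_fork[OF pb inj1 loc_coequalizerD(1,2,4)[OF coeq] j jp] pi1_j
    by blast
  then show ?thesis
    by (rule loc_iso_of_coequalizer_factor[OF coeq loc_pullbackD(4)[OF pb] j inj_j jp,
          of "\<lambda>y. {(undefined, y, undefined, undefined)}"
            "\<lambda>b. {(undefined, undefined, b, undefined)}"])
      (simp_all add: inj_on_def)
qed

end
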